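(* Let $e_1,\dots,e_m$ be a chain of distinct edges, i.e. $e_j$ and $e_{j+1}$ are linked for each $j=1,\dots,m-1$, and let $1\le i\le m$. Fix $\lambda(e_i)$ and the values of $\lambda$ on all edges not in the chain. Then $$\int\prod_{j\ne i}\frac{d\lambda(e_j)}{\lambda(e_j)}\le(\ln4)^{m-1},$$ where the integral is over the set of $(\lambda(e_j))_{j\ne i}\in(0,\infty)^{m-1}$ for which the resulting point lies in $\Delta_L$.
   Context: $\Gamma$ is a finite trivalent graph with edge set $E$. A linking choice $L$ assigns to each vertex $v$ one of its three edges, the designated minimal edge at $v$. $\Delta_L$ is the set of $\lambda\in(0,\infty)^E$ such that, at every vertex $v$ with edges $e,f,g$: - the triangle inequalities $\lambda(e)\le\lambda(f)+\lambda(g)$, $\lambda(f)\le\lambda(e)+\lambda(g)$, $\lambda(g)\le\lambda(e)+\lambda(f)$ hold, and - the designated minimal edge has $\lambda$-value at most those of the other two. Two edges are linked if they meet at a vertex whose designated minimal edge is the third edge there. *)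

theory Defs
  imports "HOL-Analysis.Analysis" "HOL-Library.Multiset"
begin

text \<open>A finite trivalent (multi)graph: finite vertex set V, finite edge set E, and for each
vertex v the multiset inc v of the three edge-ends at v (a loop at v occurs twice in inc v).\<close>
definition trivalent_graph :: "'v set \<Rightarrow> 'e set \<Rightarrow> ('v \<Rightarrow> 'e multiset) \<Rightarrow> bool" where
  "trivalent_graph V E inc \<longleftrightarrow> finite V \<and> finite E \<and>
     (\<forall>v\<in>V. size (inc v) = 3 \<and> set_mset (inc v) \<subseteq> E) \<and>
     (\<forall>e\<in>E. (\<Sum>v\<in>V. count (inc v) e) = 2)"

definition linking_choice :: "'v set \<Rightarrow> ('v \<Rightarrow> 'e multiset) \<Rightarrow> ('v \<Rightarrow> 'e) \<Rightarrow> bool" where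
  "linking_choice V inc L \<longleftrightarrow> (\<forall>v\<in>V. L v \<in># inc v)"

definition in_Delta :: "'v set \<Rightarrow> 'e set \<Rightarrow> ('v \<Rightarrow> 'e multiset) \<Rightarrow> ('v \<Rightarrow> 'e) \<Rightarrow> ('e \<Rightarrow> real) \<Rightarrow> bool" where
  "in_Delta V E inc L lam \<longleftrightarrow> (\<forall>e\<in>E. 0 < lam e) \<and>
     (\<forall>v\<in>V. \<forall>e. e \<in># inc v \<longrightarrow> lam e \<le> sum_mset (image_mset lam (inc v - {#e#}))) \<and>
     (\<forall>v\<in>V. \<forall>f. f \<in># inc v \<longrightarrow> lam (L v) \<le> lam f)"

definition linked :: "'v set \<Rightarrow> ('v \<Rightarrow> 'e multiset) \<Rightarrow> ('v \<Rightarrow> 'e) \<Rightarrow> 'e \<Rightarrow> 'e \<Rightarrow> bool" where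
  "linked V inc L e f \<longleftrightarrow> (\<exists>v\<in>V. inc v = {#e, f, L v#})"

end

theory Submission imports Defs begin

text \<open>At a vertex whose designated minimal edge is g, the two linked edges e, f satisfy
lambda(e) \<le> lambda(f) + lambda(g) \<le> 2 lambda(f), so consecutive values along the chain differ by
at most a factor 2. Integrating out the free edges from the ends of the chain inwards towards e_i,
each lambda(e_j) ranges within a factor 2 of the value a at its neighbour on the side of e_i and
contributes at most ln(2a) - ln(a/2) = ln 4; by Tonelli the whole integral is at most
(ln 4)^(m-1).\<close>

definition ratio_window :: "real \<Rightarrow> real \<Rightarrow> real" where
  "ratio_window a t = (if 0 < t \<and> a / 2 \<le> t \<and> t \<le> 2 * a then 1 / t else 0)"

lemma borel_measurable_ratio_window:
  "(\<lambda>(a, t). ennreal (ratio_window a t)) \<in> borel_measurable (borel \<Otimes>\<^sub>M borel)"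
  unfolding ratio_window_def case_prod_beta by measurable

lemma nn_integral_ratio_window_le: "(\<integral>\<^sup>+ t. ennreal (ratio_window a t) \<partial>lborel) \<le> ennreal (ln 4)"
proof (cases "0 < a")
  case False
  then have "\<And>t. ratio_window a t = 0"
    unfolding ratio_window_def by auto
  then show ?thesis by simp
next
  case True
  have "(\<integral>\<^sup>+ t. ennreal (ratio_window a t) \<partial>lborel)
      = (\<integral>\<^sup>+ t. ennreal (1 / t) * indicator {a/2 .. 2*a} t \<partial>lborel)"
    using True by (intro nn_integral_cong) (auto simp: ratio_window_def indicator_def)
  also have "\<dots> = ln (2 * a) - ln (a / 2)"
    using True by (intro nn_integral_FTC_Icc) (auto intro!: derivative_eq_intros)
  also have "ln (2 * a) - ln (a / 2) = ln 4"
    using True ln_mult[of 2 2] by (simp add: ln_div ln_mult)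
  finally show ?thesis by simp
qed

lemma borel_measurable_tree_kernel:
  fixes f :: "real \<Rightarrow> real \<Rightarrow> ennreal"
  assumes f_meas: "case_prod f \<in> borel_measurable (borel \<Otimes>\<^sub>M borel)"
    and "set ks \<subseteq> I" "\<And>n. n < length ks \<Longrightarrow> q n \<in> insert r I"
  shows "(\<lambda>x. \<Prod>n<length ks. f ((x(r := c)) (q n)) (x (ks ! n)))
    \<in> borel_measurable (PiM I (\<lambda>_. lborel))"
proof -
  have component_meas: "(\<lambda>x. (x(r := c)) e) \<in> borel_measurable (PiM I (\<lambda>_. lborel))"
    if "e \<in> insert r I" for e
    using that by (cases "e = r") auto
  have "ks ! n \<in> I" if "n < length ks" for n
    using assms(2) nth_mem[OF that] by blast
  then show ?thesis
    using assms(3) by (intro borel_measurable_prod_ennreal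
        measurable_compose[OF measurable_Pair f_meas, simplified] component_meas) auto
qed

lemma nn_integral_tree_kernel_le:
  fixes ks :: "'e list" and q :: "nat \<Rightarrow> 'e" and f :: "real \<Rightarrow> real \<Rightarrow> ennreal"
  assumes f_meas: "case_prod f \<in> borel_measurable (borel \<Otimes>\<^sub>M borel)"
    and f_bound: "\<And>a. (\<integral>\<^sup>+ t. f a t \<partial>lborel) \<le> C"
    and "distinct ks" "r \<notin> set ks"
    and "\<And>n. n < length ks \<Longrightarrow> q n \<in> insert r (set (take n ks))"
  shows "(\<integral>\<^sup>+ x. (\<Prod>n<length ks. f ((x(r := c)) (q n)) (x (ks ! n))) \<partial>PiM (set ks) (\<lambda>_. lborel))
    \<le> C ^ length ks"
  using assms(3-5)
proof (induction ks rule: rev_induct)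
  case Nil
  then show ?case by (simp add: PiM_empty)
next
  case (snoc k ks)
  let ?M = "\<lambda>_::'e. lborel :: real measure"
  let ?G = "\<lambda>x. \<Prod>n<length ks. f ((x(r := c)) (q n)) (x (ks ! n))"
  let ?g = "\<lambda>x. f ((x(r := c)) (q (length ks)))"
  interpret product_sigma_finite ?M by standard
  have k: "k \<notin> set ks" "k \<noteq> r"
    using snoc.prems by auto
  have parent: "q n \<in> insert r (set ks)" if "n \<le> length ks" for n
    using snoc.prems(3)[of n] that by (auto simp: take_append dest: in_set_takeD)
  have IH: "integral\<^sup>N (PiM (set ks) ?M) ?G \<le> C ^ length ks"
    using snoc.prems by (intro snoc.IH) (auto simp: take_append)
  have G_meas: "?G \<in> borel_measurable (PiM (set ks) ?M)"
    using parent by (intro borel_measurable_tree_kernel[OF f_meas]) auto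
  have integrand_meas: "(\<lambda>x. \<Prod>n<length (ks @ [k]). f ((x(r := c)) (q n)) (x ((ks @ [k]) ! n)))
      \<in> borel_measurable (PiM (insert k (set ks)) ?M)"
    using parent by (intro borel_measurable_tree_kernel[OF f_meas]) (auto simp: less_Suc_eq_le)
  \<comment> \<open>the variable k occurs only in the last factor, as all parents precede it\<close>
  have split_last: "(\<Prod>n<length (ks @ [k]). f ((x(k := t, r := c)) (q n)) ((x(k := t)) ((ks @ [k]) ! n)))
      = ?G x * ?g x t" for x t
  proof -
    have "(x(k := t, r := c)) (q n) = (x(r := c)) (q n)" if "n \<le> length ks" for n
      using parent[OF that] k by auto
    moreover have "ks ! n \<noteq> k" if "n < length ks" for n
      using that k by auto
    ultimately show ?thesis
      by (simp add: nth_append)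
  qed
  have "(\<integral>\<^sup>+ x. (\<Prod>n<length (ks @ [k]). f ((x(r := c)) (q n)) (x ((ks @ [k]) ! n)))
        \<partial>PiM (set (ks @ [k])) ?M)
      = (\<integral>\<^sup>+ x. (\<integral>\<^sup>+ t. (\<Prod>n<length (ks @ [k]).
          f ((x(k := t, r := c)) (q n)) ((x(k := t)) ((ks @ [k]) ! n))) \<partial>lborel) \<partial>PiM (set ks) ?M)"
    unfolding set_append set_simps Un_insert_right sup_bot_right
    by (rule product_nn_integral_insert[OF _ k(1) integrand_meas]) simp
  also have "\<dots> = (\<integral>\<^sup>+ x. (\<integral>\<^sup>+ t. ?G x * ?g x t \<partial>lborel) \<partial>PiM (set ks) ?M)"
    by (simp only: split_last)
  also have "\<dots> = (\<integral>\<^sup>+ x. ?G x * (\<integral>\<^sup>+ t. ?g x t \<partial>lborel) \<partial>PiM (set ks) ?M)"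
    using measurable_Pair2[OF f_meas] by (intro nn_integral_cong nn_integral_cmult) simp
  also have "\<dots> \<le> (\<integral>\<^sup>+ x. ?G x * C \<partial>PiM (set ks) ?M)"
    by (intro nn_integral_mono mult_left_mono f_bound) auto
  also have "\<dots> = integral\<^sup>N (PiM (set ks) ?M) ?G * C"
    using G_meas by (rule nn_integral_multc)
  also have "\<dots> \<le> C ^ length ks * C"
    using IH by (rule mult_right_mono) auto
  finally show ?case
    by (simp add: mult.commute)
qed

lemma linked_sym: "linked V inc L e f \<Longrightarrow> linked V inc L f e"
  unfolding linked_def by (auto simp: add_mset_commute)

lemma in_Delta_linked_le_double:
  assumes Delta: "in_Delta V E inc L lam" and "linked V inc L e f"
  shows "lam e \<le> 2 * lam f"
proof -
  obtain v where v: "v \<in> V" "inc v = {#e, f, L v#}"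
    using assms(2) unfolding linked_def by blast
  have "\<forall>e'. e' \<in># inc v \<longrightarrow> lam e' \<le> sum_mset (image_mset lam (inc v - {#e'#}))"
    using Delta v(1) unfolding in_Delta_def by blast
  then have "lam e \<le> lam f + lam (L v)"
    using v(2) by auto
  moreover have "lam (L v) \<le> lam f"
    using Delta v unfolding in_Delta_def by auto
  ultimately show ?thesis by linarith
qed

lemma in_Delta_prod_inverse_eq_windows:
  assumes Delta: "in_Delta V E inc L lam" and "set ks \<subseteq> E" "distinct ks"
    and linked: "\<And>n. n < length ks \<Longrightarrow> linked V inc L (p n) (ks ! n)"
  shows "ennreal (\<Prod>e\<in>set ks. 1 / lam e)
    = (\<Prod>n<length ks. ennreal (ratio_window (lam (p n)) (lam (ks ! n))))"
proof -
  have pos: "0 < lam (ks ! n)" if "n < length ks" for n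
    using Delta assms(2) nth_mem[OF that] unfolding in_Delta_def by blast
  have window: "ratio_window (lam (p n)) (lam (ks ! n)) = 1 / lam (ks ! n)" if "n < length ks" for n
    using pos[OF that] in_Delta_linked_le_double[OF Delta] linked[OF that] linked_sym
    unfolding ratio_window_def by fastforce
  have "(\<Prod>e\<in>set ks. 1 / lam e) = (\<Prod>n<length ks. 1 / lam (ks ! n))"
    using prod.reindex_bij_betw[OF bij_betw_nth[OF assms(3) refl refl], of "\<lambda>e. 1 / lam e"]
    by (simp add: lessThan_atLeast0)
  also have "ennreal \<dots> = (\<Prod>n<length ks. ennreal (1 / lam (ks ! n)))"
    using pos by (intro prod_ennreal[symmetric]) (simp add: less_imp_le)
  finally show ?thesis
    using window by simp
qed

lemma chain_rooted_enumeration: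
  assumes "distinct es" "i < length es"
  obtains ks q where "distinct ks" "set ks = set es - {es ! i}" "length ks = length es - 1"
    and "\<And>n. n < length ks \<Longrightarrow> q n \<in> insert (es ! i) (set (take n ks))"
    and "\<And>n. n < length ks \<Longrightarrow> \<exists>j. Suc j < length es \<and> {q n, ks ! n} = {es ! j, es ! Suc j}"
proof -
  \<comment> \<open>ks walks away from es ! i, first to the left and then to the right;
    the parent q n of ks ! n is its neighbour in es on the side of es ! i\<close>
  define ks where "ks = rev (take i es) @ drop (Suc i) es"
  define q where "q n = (if n = 0 \<or> n = i then es ! i else ks ! (n - 1))" for n
  have length_ks: "length ks = length es - 1"
    unfolding ks_def using assms(2) by auto
  have nth_ks: "ks ! n = (if n < i then es ! (i - 1 - n) else es ! Suc n)" if "n < length ks" for n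
    using that assms(2) unfolding length_ks by (auto simp: ks_def nth_append rev_nth min_def)
  have "es = take i es @ es ! i # drop (Suc i) es"
    using assms(2) by (simp add: Cons_nth_drop_Suc)
  then have "distinct (take i es @ es ! i # drop (Suc i) es)"
    and "set es = set (take i es) \<union> insert (es ! i) (set (drop (Suc i) es))"
    using assms(1) by (metis, metis set_append list.simps(15))
  then have "distinct ks" "set ks = set es - {es ! i}"
    unfolding ks_def by auto
  moreover have "q n \<in> insert (es ! i) (set (take n ks))" if "n < length ks" for n
    using that unfolding q_def by (auto simp: in_set_conv_nth intro!: exI[of _ "n - 1"])
  moreover have "\<exists>j. Suc j < length es \<and> {q n, ks ! n} = {es ! j, es ! Suc j}"
    if "n < length ks" for n
  proof (cases "n < i")
    case True
    then have "ks ! n = es ! (i - 1 - n)" "q n = es ! Suc (i - 1 - n)"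
      using nth_ks[OF that] nth_ks[of "n - 1"] that unfolding q_def by (auto simp: Suc_diff_Suc)
    then show ?thesis
      using True assms(2) by (intro exI[of _ "i - 1 - n"]) auto
  next
    case False
    then have "ks ! n = es ! Suc n" "q n = es ! n"
      using nth_ks[OF that] nth_ks[of "n - 1"] that unfolding q_def by auto
    then show ?thesis
      using that length_ks by (intro exI[of _ n]) auto
  qed
  ultimately show ?thesis
    using that length_ks by blast
qed

theorem mainTheorem8:
  fixes V :: "'v set" and E :: "'e set" and inc :: "'v \<Rightarrow> 'e multiset"
    and L :: "'v \<Rightarrow> 'e" and es :: "'e list" and i :: nat and lam0 :: "'e \<Rightarrow> real"
  assumes "trivalent_graph V E inc"
    and "linking_choice V inc L"
    and "es \<noteq> []" and "distinct es" and "set es \<subseteq> E"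
    and "\<And>j. Suc j < length es \<Longrightarrow> linked V inc L (es ! j) (es ! Suc j)"
    and "i < length es"
  shows "(\<integral>\<^sup>+ x. (if in_Delta V E inc L
                      (\<lambda>e. if e \<in> set es - {es ! i} then x e else lam0 e)
                  then ennreal (\<Prod>j\<in>set es - {es ! i}. 1 / x j) else 0)
            \<partial>(PiM (set es - {es ! i}) (\<lambda>_. lborel)))
         \<le> ennreal ((ln 4) ^ (length es - 1))"
proof -
  let ?r = "es ! i" and ?F = "set es - {es ! i}"
  let ?lam = "\<lambda>x e. if e \<in> ?F then x e else lam0 e"
  obtain ks q where ks: "distinct ks" "set ks = ?F" "length ks = length es - 1"
    and parent: "\<And>n. n < length ks \<Longrightarrow> q n \<in> insert ?r (set (take n ks))"
    and consecutive: "\<And>n. n < length ks \<Longrightarrow> \<exists>j. Suc j < length es \<and> {q n, ks ! n} = {es ! j, es ! Suc j}"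
    using chain_rooted_enumeration[OF assms(4,7)] by blast
  have linked_parent: "linked V inc L (q n) (ks ! n)" if "n < length ks" for n
    using consecutive[OF that] assms(6) by (auto simp: doubleton_eq_iff intro: linked_sym)
  let ?K = "\<lambda>x. \<Prod>n<length ks. ennreal (ratio_window ((x(?r := lam0 ?r)) (q n)) (x (ks ! n)))"
  have pointwise: "(if in_Delta V E inc L (?lam x) then ennreal (\<Prod>j\<in>?F. 1 / x j) else 0) \<le> ?K x"
    for x
  proof (cases "in_Delta V E inc L (?lam x)")
    case True
    have "ennreal (\<Prod>j\<in>?F. 1 / x j) = ennreal (\<Prod>j\<in>set ks. 1 / ?lam x j)"
      using ks(2) by simp
    also have "\<dots> = (\<Prod>n<length ks. ennreal (ratio_window (?lam x (q n)) (?lam x (ks ! n))))"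
      using True ks(1) assms(5) linked_parent
      by (intro in_Delta_prod_inverse_eq_windows) (auto simp: ks(2))
    also have "\<dots> = ?K x"
      using parent ks(2) nth_mem by (intro prod.cong) (auto dest: in_set_takeD)
    finally show ?thesis
      using True by simp
  qed simp
  have "(\<integral>\<^sup>+ x. ?K x \<partial>PiM ?F (\<lambda>_. lborel)) \<le> ennreal (ln 4) ^ length ks"
    unfolding ks(2)[symmetric] using parent ks(1,2)
    by (intro nn_integral_tree_kernel_le[where f = "\<lambda>a t. ennreal (ratio_window a t)"])
      (auto simp: borel_measurable_ratio_window nn_integral_ratio_window_le)
  then show ?thesis
    using order_trans[OF nn_integral_mono[OF pointwise]] by (simp add: ks(3) ennreal_power)
qed

end
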